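(* Let $A$ be a finite alphabet, $L\subseteq A^*$ and $m\in\mathbb{N}$. If all words in $\min(L)$ have length at most $m$, then ${\uparrow}L$ is $m$-PT while ${\uparrow}_<L$ and $\min(L)$ are $(m+1)$-PT.
   Context: $u\sqsubseteq v$ (subword) means $u=a_1\cdots a_n$ with letters $a_i$ and $v=v_0a_1v_1\cdots a_nv_n$; $u\sqsubset v$ means $u\sqsubseteq v$ and $u\ne v$. ${\uparrow}L=\{v~|~\exists u\in L: u\sqsubseteq v\}$, ${\uparrow}_<L=\{v~|~\exists u\in L: u\sqsubset v\}$, $\min(L)=\{u\in L~|~\forall v\in L: v\not\sqsubset u\}$. $u\sim_n v$ iff $u,v$ have the same subwords of length at most $n$; $L$ is $n$-PT if it is a union of $\sim_n$-classes. *)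

theory Defs
  imports Main "HOL-Library.Sublist"
begin

(* words over alphabet 'a are lists; subword order u \<sqsubseteq> v is library subseq (scattered subword) *)

definition upclosure :: "'a list set \<Rightarrow> 'a list set" where
  "upclosure L = {v. \<exists>u\<in>L. subseq u v}"

definition strict_upclosure :: "'a list set \<Rightarrow> 'a list set" where
  "strict_upclosure L = {v. \<exists>u\<in>L. strict_subseq u v}"

definition minwords :: "'a list set \<Rightarrow> 'a list set" where
  "minwords L = {u\<in>L. \<forall>v\<in>L. \<not> strict_subseq v u}"

definition subwords_upto :: "nat \<Rightarrow> 'a list \<Rightarrow> 'a list set" where
  "subwords_upto n u = {w. length w \<le> n \<and> subseq w u}"

definition simeq :: "nat \<Rightarrow> 'a list \<Rightarrow> 'a list \<Rightarrow> bool" where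
  "simeq n u v \<longleftrightarrow> subwords_upto n u = subwords_upto n v"

definition is_PT :: "nat \<Rightarrow> 'a list set \<Rightarrow> bool" where
  "is_PT n L \<longleftrightarrow> (\<forall>u v. simeq n u v \<longrightarrow> (u \<in> L \<longleftrightarrow> v \<in> L))"

end

theory Submission
  imports Defs
begin

text \<open>Since the subword order is well founded, \<open>\<up>L\<close> and \<open>\<up>\<^sub><L\<close> only depend on the minimal
  words of \<open>L\<close>. Membership of \<open>v\<close> in \<open>\<up>K\<close> asks whether some \<open>u \<in> K\<close> is a subword of \<open>v\<close>, which
  is determined by the subwords of \<open>v\<close> of length \<open>\<le> m\<close> when all of \<open>K\<close> has length \<open>\<le> m\<close>. If
  \<open>u \<sqsubset> v\<close>, then \<open>u\<close> extended by one letter is still a subword of \<open>v\<close>, so membership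
  in \<open>\<up>\<^sub><K\<close> is read off the subwords of length \<open>\<le> m + 1\<close>. Finally
  \<open>min(L) = \<up>L - \<up>\<^sub><L\<close>.\<close>

lemma strict_subseq_length_less: "strict_subseq u v \<Longrightarrow> length u < length v"
  by (metis strict_subseq_def list_emb_length order_le_less subseq_same_length)

lemma strict_subseq_extend_by_one:
  "strict_subseq u v \<Longrightarrow> \<exists>w. strict_subseq u w \<and> subseq w v \<and> length w = Suc (length u)"
proof (induction v arbitrary: u)
  case Nil
  then show ?case by (auto simp: strict_subseq_def)
next
  case (Cons a v)
  then have sub: "subseq u (a # v)" and neq: "u \<noteq> a # v"
    by (auto simp: strict_subseq_def)
  show ?case
  proof (cases "subseq u v")
    case True
    show ?thesis
    proof (cases "u = v")
      case True
      then show ?thesis by (intro exI[of _ "a # v"]) (auto simp: strict_subseq_def)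
    next
      case False
      with \<open>subseq u v\<close> Cons.IH[of u] obtain w
        where "strict_subseq u w" "subseq w v" "length w = Suc (length u)"
        by (auto simp: strict_subseq_def)
      then show ?thesis by auto
    qed
  next
    case False
    with sub obtain u' where u: "u = a # u'" "subseq u' v"
      by (cases u) (auto split: if_splits)
    with neq Cons.IH[of u'] obtain w
      where "strict_subseq u' w" "subseq w v" "length w = Suc (length u')"
      by (auto simp: strict_subseq_def)
    with u show ?thesis
      by (intro exI[of _ "a # w"]) (auto simp: strict_subseq_def)
  qed
qed

lemma minwords_below:
  assumes "u \<in> L"
  shows "\<exists>u0\<in>minwords L. subseq u0 u"
  using assms
proof (induction "length u" arbitrary: u rule: less_induct)
  case less
  show ?case
  proof (cases "\<exists>v\<in>L. strict_subseq v u")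
    case True
    then obtain v where "v \<in> L" "strict_subseq v u" by blast
    with less strict_subseq_length_less obtain u0 where "u0 \<in> minwords L" "subseq u0 v"
      by blast
    with \<open>strict_subseq v u\<close> show ?thesis by (meson strict_subseq_def subseq_order.order_trans)
  next
    case False
    with less show ?thesis by (auto simp: minwords_def)
  qed
qed

lemma minwords_subset: "minwords L \<subseteq> L"
  by (auto simp: minwords_def)

lemma upclosure_minwords: "upclosure (minwords L) = upclosure L"
proof
  show "upclosure L \<subseteq> upclosure (minwords L)"
  proof
    fix v assume "v \<in> upclosure L"
    then obtain u where "u \<in> L" "subseq u v" by (auto simp: upclosure_def)
    moreover from \<open>u \<in> L\<close> obtain u0 where "u0 \<in> minwords L" "subseq u0 u"
      using minwords_below by blast
    ultimately show "v \<in> upclosure (minwords L)"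
      unfolding upclosure_def by (blast intro: subseq_order.order_trans)
  qed
qed (use minwords_subset in \<open>auto simp: upclosure_def\<close>)

lemma strict_upclosure_minwords: "strict_upclosure (minwords L) = strict_upclosure L"
proof
  show "strict_upclosure L \<subseteq> strict_upclosure (minwords L)"
  proof
    fix v assume "v \<in> strict_upclosure L"
    then obtain u where "u \<in> L" "strict_subseq u v" by (auto simp: strict_upclosure_def)
    moreover from \<open>u \<in> L\<close> obtain u0 where "u0 \<in> minwords L" "subseq u0 u"
      using minwords_below by blast
    ultimately show "v \<in> strict_upclosure (minwords L)"
      unfolding strict_upclosure_def by (blast intro: subseq_order.le_less_trans)
  qed
qed (use minwords_subset in \<open>auto simp: strict_upclosure_def\<close>)

lemma minwords_eq_Diff: "minwords L = upclosure L - strict_upclosure L"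
  unfolding minwords_def upclosure_def strict_upclosure_def strict_subseq_def
  by auto

lemma simeq_sym: "simeq n u v \<Longrightarrow> simeq n v u"
  by (simp add: simeq_def)

lemma simeq_subseq:
  "simeq n v v' \<Longrightarrow> subseq u v \<Longrightarrow> length u \<le> n \<Longrightarrow> subseq u v'"
  unfolding simeq_def subwords_upto_def by blast

lemma subwords_upto_restrict:
  "k \<le> n \<Longrightarrow> subwords_upto k u = {w \<in> subwords_upto n u. length w \<le> k}"
  by (auto simp: subwords_upto_def)

lemma simeq_mono: "k \<le> n \<Longrightarrow> simeq n u v \<Longrightarrow> simeq k u v"
  unfolding simeq_def by (simp add: subwords_upto_restrict)

lemma is_PT_mono: "k \<le> n \<Longrightarrow> is_PT k L \<Longrightarrow> is_PT n L"
  unfolding is_PT_def using simeq_mono by blast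

lemma is_PT_Diff: "is_PT n A \<Longrightarrow> is_PT n B \<Longrightarrow> is_PT n (A - B)"
  unfolding is_PT_def by blast

lemma is_PT_upclosure:
  assumes short: "\<forall>u\<in>K. length u \<le> n"
  shows "is_PT n (upclosure K)"
proof -
  have "v' \<in> upclosure K" if "simeq n v v'" and "v \<in> upclosure K" for v v'
  proof -
    from \<open>v \<in> upclosure K\<close> obtain u where "u \<in> K" "subseq u v"
      by (auto simp: upclosure_def)
    with short \<open>simeq n v v'\<close> have "subseq u v'"
      using simeq_subseq by blast
    with \<open>u \<in> K\<close> show ?thesis
      by (auto simp: upclosure_def)
  qed
  then show ?thesis
    unfolding is_PT_def using simeq_sym by blast
qed

lemma is_PT_strict_upclosure:
  assumes short: "\<forall>u\<in>K. length u \<le> n"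
  shows "is_PT (Suc n) (strict_upclosure K)"
proof -
  have "v' \<in> strict_upclosure K"
    if "simeq (Suc n) v v'" and "v \<in> strict_upclosure K" for v v'
  proof -
    from \<open>v \<in> strict_upclosure K\<close> obtain u where "u \<in> K" "strict_subseq u v"
      by (auto simp: strict_upclosure_def)
    then obtain w where w: "strict_subseq u w" "subseq w v" "length w = Suc (length u)"
      using strict_subseq_extend_by_one by blast
    with short \<open>u \<in> K\<close> \<open>simeq (Suc n) v v'\<close> have "subseq w v'"
      using simeq_subseq by fastforce
    with w \<open>u \<in> K\<close> show ?thesis
      by (auto simp: strict_upclosure_def intro: subseq_order.less_le_trans)
  qed
  then show ?thesis
    unfolding is_PT_def using simeq_sym by blast
qed

theorem corollary9:
  fixes L :: "('a::finite) list set" and m :: nat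
  assumes "\<forall>u\<in>minwords L. length u \<le> m"
  shows "is_PT m (upclosure L) \<and> is_PT (m + 1) (strict_upclosure L)
         \<and> is_PT (m + 1) (minwords L)"
proof -
  have up: "is_PT m (upclosure L)"
    using is_PT_upclosure[OF assms] by (simp add: upclosure_minwords)
  have strict_up: "is_PT (m + 1) (strict_upclosure L)"
    using is_PT_strict_upclosure[OF assms] by (simp add: strict_upclosure_minwords)
  have "is_PT (m + 1) (upclosure L)"
    using is_PT_mono[OF _ up] by simp
  then have "is_PT (m + 1) (minwords L)"
    unfolding minwords_eq_Diff using strict_up by (rule is_PT_Diff)
  with up strict_up show ?thesis by blast
qed

end
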